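(* Let $l$ be an even integer with $l\ge6$, and consider all strings $x\in B$ with $|x|=l$ and $\delta(x)=2$. Then: - if $l=4n$ (so $n\ge2$), the maximum of $s([x]_2)$ over these strings is $F_{4n}+F_{2n}^2$, attained at $x=(10)^n0(10)^{n-1}0$; - if $l=4n+2$ (so $n\ge1$), the maximum of $s([x]_2)$ over these strings is $F_{4n+2}+F_{2n}F_{2n+2}$, attained at $x=(10)^n0(10)^n0$.
   Context: Stern's sequence $(a(n))_{n\ge0}$: $a(0)=0$, $a(1)=1$, $a(2n)=a(n)$, $a(2n+1)=a(n)+a(n+1)$; $s(n)=a(n+1)$. For a binary string $x$, $[x]_2$ is the integer it represents in base 2 and $|x|$ its length. $B$ denotes the set of nonempty binary strings that are concatenations of blocks each equal to $10$ or $100$; for $x\in B$, $\delta(x)$ is the number of $0$s minus the number of $1$s in $x$, which equals the number of $100$ blocks. $x^i$ denotes $i$-fold concatenation. $F_n$ are the Fibonacci numbers ($F_0=0,F_1=1,F_n=F_{n-1}+F_{n-2}$). *)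

theory Defs
  imports Main "HOL-Number_Theory.Fib"
begin

function stern :: "nat \<Rightarrow> nat" where
  "stern n = (if n = 0 then 0 else if n = 1 then 1
              else if even n then stern (n div 2)
              else stern (n div 2) + stern (n div 2 + 1))"
  by auto
termination by (relation "measure id") (auto elim!: oddE)

declare stern.simps [simp del]

definition s_stern :: "nat \<Rightarrow> nat" where
  "s_stern n = stern (n + 1)"

text \<open>Binary strings as bool lists (True = 1, False = 0), most significant digit first.\<close>
definition bin_val :: "bool list \<Rightarrow> nat" where
  "bin_val x = foldl (\<lambda>acc b. 2 * acc + (if b then 1 else 0)) 0 x"

definition inB :: "bool list \<Rightarrow> bool" where
  "inB x \<longleftrightarrow> (\<exists>bs. bs \<noteq> [] \<and>
      (\<forall>b\<in>set bs. b = [True, False] \<or> b = [True, False, False]) \<and> x = concat bs)"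

definition delta :: "bool list \<Rightarrow> int" where
  "delta x = int (count_list x False) - int (count_list x True)"

definition pow_str :: "bool list \<Rightarrow> nat \<Rightarrow> bool list" where
  "pow_str w i = concat (replicate i w)"

end

theory Submission
  imports Defs
begin

text \<open>Reading a binary string from the left, the pair (a(v), a(v+1)) for the prefix value v
  evolves by (p, q) \<mapsto> (p + q, q) on a 1 and (p, q) \<mapsto> (p, p + q) on a 0; a block 10 acts
  by a power of the Fibonacci matrix. A string of B with \<delta> = 2 is (10)^A 0 (10)^B 0 (10)^C
  with A, B \<ge> 1. The form q^2 - pq - p^2 is preserved by 10 and does not decrease under 0, so
  after (10)^A 0 we have q/p above the golden ratio, while F(2C+2)/F(2C+1) lies below it; this
  shows that moving a block 10 from the end in front of the second 0 does not decrease s.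
  Hence C = 0, and then s = F(2(A+B)+2) + F(2A) F(2B+2), whose second term is maximal for
  A and B+1 as equal as possible by d'Ocagne's identity.\<close>

section \<open>Stern's sequence as a pair automaton\<close>

lemma stern_0 [simp]: "stern 0 = 0"
  and stern_Suc_0 [simp]: "stern (Suc 0) = 1"
  by (simp_all add: stern.simps)

lemma stern_double: "stern (2 * m) = stern m"
  by (cases "m = 0") (simp_all add: stern.simps[of "2 * m"])

lemma stern_double_Suc: "stern (Suc (2 * m)) = stern m + stern (Suc m)"
  by (cases "m = 0") (simp_all add: stern.simps[of "Suc (2 * m)"])

definition stern_step :: "nat \<times> nat \<Rightarrow> bool \<Rightarrow> nat \<times> nat" where
  "stern_step st b = (case st of (p, q) \<Rightarrow> if b then (p + q, q) else (p, p + q))"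

definition stern_run :: "nat \<times> nat \<Rightarrow> bool list \<Rightarrow> nat \<times> nat" where
  "stern_run = foldl stern_step"

lemma stern_step_True [simp]: "stern_step (p, q) True = (p + q, q)"
  and stern_step_False [simp]: "stern_step (p, q) False = (p, p + q)"
  by (simp_all add: stern_step_def)

lemma stern_run_Nil [simp]: "stern_run st [] = st"
  and stern_run_Cons [simp]: "stern_run st (b # x) = stern_run (stern_step st b) x"
  and stern_run_append [simp]: "stern_run st (x @ y) = stern_run (stern_run st x) y"
  by (simp_all add: stern_run_def)

lemma stern_run_bin_val: "stern_run (0, 1) x = (stern (bin_val x), stern (Suc (bin_val x)))"
proof (induction x rule: rev_induct)
  case Nil
  show ?case by (simp add: bin_val_def)
next
  case (snoc b x)
  have "bin_val (x @ [b]) = 2 * bin_val x + (if b then 1 else 0)"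
    by (simp add: bin_val_def)
  with snoc show ?case
    using stern_double[of "Suc (bin_val x)"]
    by (cases b) (simp_all add: stern_double stern_double_Suc)
qed

lemma s_stern_bin_val: "s_stern (bin_val x) = snd (stern_run (0, 1) x)"
  by (simp only: s_stern_def stern_run_bin_val snd_conv Suc_eq_plus1)

abbreviation pow10 :: "nat \<Rightarrow> bool list" where
  "pow10 k \<equiv> pow_str [True, False] k"

lemma pow_str_0 [simp]: "pow_str w 0 = []"
  and pow_str_Suc: "pow_str w (Suc k) = w @ pow_str w k"
  by (simp_all add: pow_str_def)

lemma pow_str_Suc': "pow_str w (Suc k) = pow_str w k @ w"
  by (simp add: pow_str_def replicate_append_same[symmetric])

lemma length_pow_str [simp]: "length (pow_str w k) = k * length w"
  by (induction k) (simp_all add: pow_str_Suc)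

text \<open>The first component is stated additively: it equals F(2k-1) p + F(2k) q, which would
  need truncated subtraction at k = 0.\<close>

lemma stern_run_pow10:
  "fst (stern_run (p, q) (pow10 k)) + fib (2 * k) * p = fib (2 * k + 1) * p + fib (2 * k) * q
   \<and> snd (stern_run (p, q) (pow10 k)) = fib (2 * k) * p + fib (2 * k + 1) * q"
proof (induction k arbitrary: p q)
  case (Suc k)
  have run: "stern_run (p, q) (pow10 (Suc k)) = stern_run (p + q, p + 2 * q) (pow10 k)"
    by (simp add: pow_str_Suc mult_2 add.assoc)
  have "fib (2 * Suc k) = fib (2 * k + 1) + fib (2 * k)"
    and "fib (2 * Suc k + 1) = fib (2 * k + 1) + fib (2 * Suc k)"
    by (simp_all add: numeral_2_eq_2)
  with Suc.IH[of "p + q" "p + 2 * q"] show ?case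
    unfolding run by (simp add: algebra_simps)
qed simp

section \<open>The golden form\<close>

text \<open>The form is positive exactly when q/p exceeds the golden ratio.\<close>

definition golden_form :: "nat \<times> nat \<Rightarrow> int" where
  "golden_form st = (case st of (p, q) \<Rightarrow> int q ^ 2 - int p * int q - int p ^ 2)"

lemma golden_form_stern_run_pow10: "golden_form (stern_run st (pow10 k)) = golden_form st"
proof (induction k arbitrary: st)
  case (Suc k)
  obtain p q where st: "st = (p, q)" by force
  have "golden_form (stern_run st (pow10 (Suc k))) = golden_form (p + q, p + 2 * q)"
    using Suc by (simp add: pow_str_Suc st mult_2 add.assoc)
  also have "\<dots> = golden_form st"
    by (simp add: golden_form_def st power2_eq_square algebra_simps)
  finally show ?case .
qed simp

lemma golden_form_stern_step_False: "golden_form st \<le> golden_form (stern_step st False)"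
  by (cases st) (simp add: golden_form_def power2_eq_square algebra_simps)

lemma golden_form_fib_odd: "golden_form (fib (2 * k + 1), fib (2 * k + 2)) = -1"
proof -
  have "int (fib (Suc (Suc (2 * k))) * fib (2 * k)) - int ((fib (Suc (2 * k)))\<^sup>2) = - 1"
    using fib_Cassini_int[of "2 * k"] by simp
  moreover have "fib (2 * k + 2) = fib (2 * k + 1) + fib (2 * k)"
    by (simp add: numeral_2_eq_2)
  ultimately show ?thesis
    by (simp add: golden_form_def power2_eq_square algebra_simps)
qed

lemma golden_form_ratio_less:
  assumes pos: "golden_form (p, q) > 0" and neg: "golden_form (a, b) < 0"
  shows "b * p < a * q"
proof -
  define P Q A B where "P = int p" and "Q = int q" and "A = int a" and "B = int b"
  have fpos: "Q\<^sup>2 - P * Q - P\<^sup>2 > 0" and fneg: "B\<^sup>2 - A * B - A\<^sup>2 < 0"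
    using pos neg by (simp_all add: golden_form_def P_def Q_def A_def B_def)
  have nonneg: "P \<ge> 0" "Q \<ge> 0" "B \<ge> 0"
    by (simp_all add: P_def Q_def B_def)
  have "A \<noteq> 0"
    using fneg by (auto simp: power2_eq_square)
  then have "A\<^sup>2 * (Q\<^sup>2 - P * Q - P\<^sup>2) > 0"
    using fpos by simp
  moreover have "P\<^sup>2 * (B\<^sup>2 - A * B - A\<^sup>2) \<le> 0"
    using fneg by (simp add: mult_nonneg_nonpos)
  moreover have "(Q * A - P * B) * (Q * A + P * B - P * A)
      = A\<^sup>2 * (Q\<^sup>2 - P * Q - P\<^sup>2) - P\<^sup>2 * (B\<^sup>2 - A * B - A\<^sup>2)"
    by (simp add: algebra_simps power2_eq_square)
  ultimately have prod_pos: "(Q * A - P * B) * (Q * A + P * B - P * A) > 0"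
    by linarith
  have "P < Q"
  proof (rule ccontr)
    assume "\<not> P < Q"
    then have "Q * Q \<le> P * P" using nonneg by (simp add: mult_mono)
    moreover have "P * Q \<ge> 0" using nonneg by simp
    ultimately show False using fpos by (simp add: power2_eq_square)
  qed
  then have "P * A \<le> Q * A" and "0 \<le> P * B"
    using nonneg by (simp_all add: A_def mult_right_mono)
  then have "Q * A + P * B - P * A \<ge> 0"
    by linarith
  with prod_pos have "Q * A - P * B > 0"
    using zero_less_mult_pos2 by fastforce
  then show ?thesis
    by (simp add: P_def Q_def A_def B_def algebra_simps flip: of_nat_mult)
qed

section \<open>Balancing products of Fibonacci numbers\<close>

lemma fib_dOcagne_int:
  "int (fib (m + 1) * fib (m + k)) - int (fib m * fib (m + k + 1)) = (-1) ^ m * int (fib k)"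
proof (induction m)
  case (Suc m)
  have "fib (Suc m + 1) = fib (m + 1) + fib m"
    and "fib (Suc m + k + 1) = fib (m + k + 1) + fib (m + k)"
    by simp_all
  with Suc show ?case by (simp add: algebra_simps)
qed simp

lemma fib_even_mult_le_shift: "fib (2 * i) * fib (2 * (j + 2)) \<le> fib (2 * (i + 1)) * fib (2 * (j + 1))"
  if "i \<le> j"
proof -
  define d where "d = j - i"
  have j: "j = i + d" using that by (simp add: d_def)
  have "int (fib (2 * i + 1) * fib (2 * i + (2 * d + 2))) - int (fib (2 * i) * fib (2 * i + (2 * d + 2) + 1))
      = int (fib (2 * d + 2))"
    using fib_dOcagne_int[of "2 * i" "2 * d + 2"] by simp
  moreover have "fib (2 * (i + 1)) = fib (2 * i + 1) + fib (2 * i)"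
    and "fib (2 * (j + 2)) = fib (2 * i + (2 * d + 2) + 1) + fib (2 * i + (2 * d + 2))"
    and "2 * (j + 1) = 2 * i + (2 * d + 2)"
    by (simp_all add: j numeral_2_eq_2 algebra_simps)
  ultimately have "int (fib (2 * i) * fib (2 * (j + 2))) \<le> int (fib (2 * (i + 1)) * fib (2 * (j + 1)))"
    by (simp add: algebra_simps)
  then show ?thesis by (simp only: of_nat_le_iff)
qed

lemma fib_even_mult_le_balanced:
  "fib (2 * i) * fib (2 * j) \<le> fib (2 * ((i + j) div 2)) * fib (2 * (i + j - (i + j) div 2))"
proof -
  have ordered: "fib (2 * i) * fib (2 * j) \<le> fib (2 * ((i + j) div 2)) * fib (2 * (i + j - (i + j) div 2))"
    if "i \<le> j" for i j
    using that
  proof (induction "j - i" arbitrary: i j rule: less_induct)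
    case less
    show ?case
    proof (cases "j \<le> i + 1")
      case True
      with less.prems have "(i + j) div 2 = i" "i + j - (i + j) div 2 = j" by auto
      then show ?thesis by simp
    next
      case False
      then have "fib (2 * i) * fib (2 * j) \<le> fib (2 * (i + 1)) * fib (2 * (j - 1))"
        using fib_even_mult_le_shift[of i "j - 2"] by (simp add: numeral_2_eq_2 Suc_diff_Suc)
      also have "\<dots> \<le> fib (2 * ((i + j) div 2)) * fib (2 * (i + j - (i + j) div 2))"
        using less.hyps[of "j - 1" "i + 1"] False by simp
      finally show ?thesis .
    qed
  qed
  show ?thesis
    using ordered[of i j] ordered[of j i] by (cases "i \<le> j") (simp_all add: add.commute mult.commute)
qed

section \<open>Words with two extra zeros\<close>

definition two_zero_word :: "nat \<Rightarrow> nat \<Rightarrow> nat \<Rightarrow> bool list" where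
  "two_zero_word A B C = pow10 A @ [False] @ pow10 B @ [False] @ pow10 C"

definition s_word :: "nat \<Rightarrow> nat \<Rightarrow> nat \<Rightarrow> nat" where
  "s_word A B C = snd (stern_run (0, 1) (two_zero_word A B C))"

lemma s_stern_two_zero_word: "s_stern (bin_val (two_zero_word A B C)) = s_word A B C"
  by (simp add: s_stern_bin_val s_word_def)

lemma s_word_shift_le: "s_word A B (Suc C) \<le> s_word A (Suc B) C"
proof -
  obtain p0 q0 where st0: "stern_run (0, 1) (pow10 A) = (p0, q0)"
    by force
  obtain p q where st: "stern_run (p0, p0 + q0) (pow10 B) = (p, q)"
    by force
  have "golden_form (0, 1) = golden_form (p0, q0)"
    using golden_form_stern_run_pow10[of "(0, 1)" A] by (simp only: st0)
  also have "\<dots> \<le> golden_form (p0, p0 + q0)"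
    using golden_form_stern_step_False[of "(p0, q0)"] by simp
  also have "\<dots> = golden_form (p, q)"
    using golden_form_stern_run_pow10[of "(p0, p0 + q0)" B] by (simp only: st)
  finally have "golden_form (p, q) > 0"
    by (simp add: golden_form_def)
  then have ratio: "fib (2 * C + 2) * p \<le> fib (2 * C + 1) * q"
    using golden_form_ratio_less golden_form_fib_odd[of C] by (simp add: less_imp_le)
  have "s_word A B (Suc C) = fib (2 * C) * (2 * p + q) + fib (2 * C + 1) * (3 * p + 2 * q)"
    by (simp add: s_word_def two_zero_word_def pow_str_Suc st0[unfolded One_nat_def] st
        stern_run_pow10 algebra_simps)
  moreover have "s_word A (Suc B) C = fib (2 * C) * (p + q) + fib (2 * C + 1) * (2 * p + 3 * q)"
    by (simp add: s_word_def two_zero_word_def pow_str_Suc' st0[unfolded One_nat_def] st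
        stern_run_pow10 algebra_simps)
  moreover have "fib (2 * C + 2) = fib (2 * C + 1) + fib (2 * C)"
    by (simp add: numeral_2_eq_2)
  ultimately show ?thesis
    using ratio by (simp add: algebra_simps)
qed

lemma s_word_le_merge: "s_word A B C \<le> s_word A (B + C) 0"
proof (induction C arbitrary: B)
  case (Suc C)
  have "s_word A B (Suc C) \<le> s_word A (Suc B) C" by (rule s_word_shift_le)
  also have "\<dots> \<le> s_word A (Suc B + C) 0" by (rule Suc.IH)
  finally show ?case by simp
qed simp

lemma s_word_tail_0: "s_word A B 0 = fib (2 * (A + B) + 2) + fib (2 * A) * fib (2 * B + 2)"
proof -
  define p q where "p = fib (2 * A)" and "q = fib (2 * A + 1)"
  obtain p' q' where st: "stern_run (p, p + q) (pow10 B) = (p', q')"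
    by force
  have "stern_run (0, 1) (pow10 A) = (p, q)"
    using stern_run_pow10[of 0 1 A] by (simp add: prod_eq_iff p_def q_def)
  then have "s_word A B 0 = p' + q'"
    by (simp add: s_word_def two_zero_word_def st)
  also have "\<dots> = fib (2 * B + 1) * p + fib (2 * B + 2) * (p + q)"
    using stern_run_pow10[of p "p + q" B] fib_plus_2[of "2 * B"]
    by (simp add: st algebra_simps)
  also have "\<dots> = fib (2 * B + 1) * fib (2 * A) + fib (2 * B + 2) * fib (2 * A + 2)"
    using fib_plus_2[of "2 * A"] by (simp add: p_def q_def)
  also have "\<dots> = fib (2 * (A + B) + 2) + fib (2 * A) * fib (2 * B + 2)"
    using fib_add[of "2 * A + 1" "2 * B"]
    by (simp add: numeral_2_eq_2 algebra_simps)
  finally show ?thesis .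
qed

lemma s_word_le:
  fixes A B C :: nat
  defines "m \<equiv> A + B + C + 1"
  shows "s_word A B C \<le> fib (2 * m) + fib (2 * (m div 2)) * fib (2 * (m - m div 2))"
proof -
  have "s_word A B C \<le> s_word A (B + C) 0"
    by (rule s_word_le_merge)
  also have "\<dots> = fib (2 * m) + fib (2 * A) * fib (2 * (B + C + 1))"
    by (simp add: s_word_tail_0 m_def algebra_simps)
  also have "fib (2 * A) * fib (2 * (B + C + 1)) \<le> fib (2 * (m div 2)) * fib (2 * (m - m div 2))"
    using fib_even_mult_le_balanced[of A "B + C + 1"] by (simp add: m_def add.assoc)
  finally show ?thesis by simp
qed

section \<open>Block decomposition of B\<close>

abbreviation is_block :: "bool list \<Rightarrow> bool" where
  "is_block b \<equiv> b = [True, False] \<or> b = [True, False, False]"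

lemma blocks_eq_replicate_10:
  "\<forall>b\<in>set bs. is_block b \<Longrightarrow> [True, False, False] \<notin> set bs
    \<Longrightarrow> bs = replicate (length bs) [True, False]"
  by (induction bs) auto

lemma blocks_with_two_100:
  assumes blocks: "\<forall>b\<in>set bs. is_block b"
    and two: "count_list bs [True, False, False] = 2"
  obtains a b c where "bs = replicate a [True, False] @ [True, False, False] # replicate b [True, False]
    @ [True, False, False] # replicate c [True, False]"
proof -
  let ?v = "[True, False, False]"
  have "?v \<in> set bs"
    using two count_list_0_iff[of bs ?v] by auto
  then obtain ys zs where bs: "bs = ys @ ?v # zs" and ys: "?v \<notin> set ys"
    using split_list_first by metis
  then have "count_list zs ?v = 1"
    using two count_list_0_iff[of ys ?v] by simp
  then have "?v \<in> set zs"
    using count_list_0_iff[of zs ?v] by auto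
  then obtain ys' zs' where zs: "zs = ys' @ ?v # zs'" and ys': "?v \<notin> set ys'"
    using split_list_first by metis
  with \<open>count_list zs ?v = 1\<close> have "?v \<notin> set zs'"
    using count_list_0_iff[of ys' ?v] count_list_0_iff[of zs' ?v] by simp
  with ys ys' blocks have "replicate (length ys) [True, False] = ys"
    and "replicate (length ys') [True, False] = ys'" and "replicate (length zs') [True, False] = zs'"
    unfolding bs zs by (simp_all flip: blocks_eq_replicate_10)
  then show ?thesis
    using that[of "length ys" "length ys'" "length zs'"] by (simp add: bs zs)
qed

lemma delta_append: "delta (x @ y) = delta x + delta y"
  by (simp add: delta_def)

lemma delta_concat_blocks:
  "\<forall>b\<in>set bs. is_block b \<Longrightarrow> delta (concat bs) = int (count_list bs [True, False, False])"
proof (induction bs)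
  case (Cons b bs)
  then have IH: "delta (concat bs) = int (count_list bs [True, False, False])"
    by simp
  from Cons.prems have "is_block b"
    by simp
  then have "delta b = (if b = [True, False, False] then 1 else 0)"
    by (elim disjE) (simp_all add: delta_def)
  with IH show ?case
    by (simp add: delta_append)
qed (simp add: delta_def)

lemma concat_replicate_eq_pow_str: "concat (replicate a w) = pow_str w a"
  by (simp add: pow_str_def)

lemma inB_delta_2_iff: "inB x \<and> delta x = 2 \<longleftrightarrow> (\<exists>A B C. x = two_zero_word (Suc A) (Suc B) C)"
proof
  assume "inB x \<and> delta x = 2"
  then obtain bs where blocks: "\<forall>b\<in>set bs. is_block b" and x: "x = concat bs"
    and "delta (concat bs) = 2"
    unfolding inB_def by blast
  then have "count_list bs [True, False, False] = 2"
    using delta_concat_blocks by simp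
  with blocks obtain a b c where "bs = replicate a [True, False] @ [True, False, False]
    # replicate b [True, False] @ [True, False, False] # replicate c [True, False]"
    by (rule blocks_with_two_100)
  then have "x = two_zero_word (Suc a) (Suc b) c"
    by (simp add: x concat_replicate_eq_pow_str two_zero_word_def pow_str_Suc')
  then show "\<exists>A B C. x = two_zero_word (Suc A) (Suc B) C"
    by blast
next
  assume "\<exists>A B C. x = two_zero_word (Suc A) (Suc B) C"
  then obtain A B C where x: "x = two_zero_word (Suc A) (Suc B) C"
    by blast
  let ?bs = "replicate A [True, False] @ [True, False, False] # replicate B [True, False]
    @ [True, False, False] # replicate C [True, False]"
  have "x = concat ?bs"
    by (simp add: x concat_replicate_eq_pow_str two_zero_word_def pow_str_Suc')
  moreover have "\<forall>b\<in>set ?bs. is_block b"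
    by auto
  ultimately have "inB x" and "delta x = int (count_list ?bs [True, False, False])"
    unfolding inB_def by (blast, simp only: delta_concat_blocks)
  then show "inB x \<and> delta x = 2"
    by simp
qed

lemma length_two_zero_word: "length (two_zero_word A B C) = 2 * (A + B + C + 1)"
  by (simp add: two_zero_word_def)

lemma s_stern_le_of_inB_delta_2:
  assumes "inB x" and "delta x = 2" and "length x = 2 * m"
  shows "s_stern (bin_val x) \<le> fib (2 * m) + fib (2 * (m div 2)) * fib (2 * (m - m div 2))"
proof -
  obtain A B C where x: "x = two_zero_word (Suc A) (Suc B) C"
    using assms(1,2) inB_delta_2_iff by blast
  then have "m = Suc A + Suc B + C + 1"
    using assms(3) by (simp add: length_two_zero_word)
  then show ?thesis
    using s_word_le[of "Suc A" "Suc B" C] by (simp add: x s_stern_two_zero_word)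
qed

lemma s_stern_delta_2_max:
  fixes m :: nat
  assumes "m \<ge> 3"
  defines "x0 \<equiv> two_zero_word (m div 2) (m - m div 2 - 1) 0"
    and "M \<equiv> fib (2 * m) + fib (2 * (m div 2)) * fib (2 * (m - m div 2))"
  shows "inB x0 \<and> length x0 = 2 * m \<and> delta x0 = 2 \<and> s_stern (bin_val x0) = M \<and>
    (\<forall>x. inB x \<and> length x = 2 * m \<and> delta x = 2 \<longrightarrow> s_stern (bin_val x) \<le> M)"
proof (intro conjI allI impI)
  have "m div 2 \<noteq> 0" and "m - m div 2 - 1 \<noteq> 0"
    using assms(1) by presburger+
  then obtain A B where A: "m div 2 = Suc A" and B: "m - m div 2 - 1 = Suc B"
    by (meson not0_implies_Suc)
  then show "inB x0" and "delta x0 = 2"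
    using inB_delta_2_iff unfolding x0_def by auto
  show "length x0 = 2 * m"
    using A B by (simp add: x0_def length_two_zero_word)
  have "2 * (m div 2 + (m - m div 2 - 1)) + 2 = 2 * m"
    and "2 * (m - m div 2 - 1) + 2 = 2 * (m - m div 2)"
    using assms(1) by auto
  then show "s_stern (bin_val x0) = M"
    by (simp only: x0_def M_def s_stern_two_zero_word s_word_tail_0)
next
  fix x assume "inB x \<and> length x = 2 * m \<and> delta x = 2"
  then show "s_stern (bin_val x) \<le> M"
    using s_stern_le_of_inB_delta_2[of x m] by (simp add: M_def)
qed

theorem mainTheorem9:
  fixes l :: nat
  assumes "even l" and "l \<ge> 6"
  shows "(\<forall>n. l = 4 * n \<longrightarrow>
            (let x0 = pow_str [True, False] n @ [False] @ pow_str [True, False] (n - 1) @ [False]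
             in inB x0 \<and> length x0 = l \<and> delta x0 = 2 \<and>
                s_stern (bin_val x0) = fib (4 * n) + (fib (2 * n))\<^sup>2 \<and>
                (\<forall>x. inB x \<and> length x = l \<and> delta x = 2 \<longrightarrow>
                     s_stern (bin_val x) \<le> fib (4 * n) + (fib (2 * n))\<^sup>2)))
       \<and> (\<forall>n. l = 4 * n + 2 \<longrightarrow>
            (let x0 = pow_str [True, False] n @ [False] @ pow_str [True, False] n @ [False]
             in inB x0 \<and> length x0 = l \<and> delta x0 = 2 \<and>
                s_stern (bin_val x0) = fib (4 * n + 2) + fib (2 * n) * fib (2 * n + 2) \<and>
                (\<forall>x. inB x \<and> length x = l \<and> delta x = 2 \<longrightarrow>
                     s_stern (bin_val x) \<le> fib (4 * n + 2) + fib (2 * n) * fib (2 * n + 2))))"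
proof (intro conjI allI impI)
  fix n assume l: "l = 4 * n"
  then have "2 * n \<ge> 3" and "l = 2 * (2 * n)"
    using assms(2) by simp_all
  moreover have "2 * n div 2 = n" and "2 * n - n - 1 = n - 1" and "2 * (2 * n) = 4 * n"
    by simp_all
  ultimately show "let x0 = pow10 n @ [False] @ pow10 (n - 1) @ [False]
    in inB x0 \<and> length x0 = l \<and> delta x0 = 2 \<and>
       s_stern (bin_val x0) = fib (4 * n) + (fib (2 * n))\<^sup>2 \<and>
       (\<forall>x. inB x \<and> length x = l \<and> delta x = 2 \<longrightarrow>
          s_stern (bin_val x) \<le> fib (4 * n) + (fib (2 * n))\<^sup>2)"
    using s_stern_delta_2_max[of "2 * n"]
    by (simp add: Let_def two_zero_word_def power2_eq_square)
next
  fix n assume l: "l = 4 * n + 2"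
  then have "2 * n + 1 \<ge> 3" and "l = 2 * (2 * n + 1)"
    using assms(2) by simp_all
  moreover have "(2 * n + 1) div 2 = n" and "2 * n + 1 - n - 1 = n"
    and "2 * (2 * n + 1) = 4 * n + 2" and "2 * (2 * n + 1 - n) = 2 * n + 2"
    by simp_all
  ultimately show "let x0 = pow10 n @ [False] @ pow10 n @ [False]
    in inB x0 \<and> length x0 = l \<and> delta x0 = 2 \<and>
       s_stern (bin_val x0) = fib (4 * n + 2) + fib (2 * n) * fib (2 * n + 2) \<and>
       (\<forall>x. inB x \<and> length x = l \<and> delta x = 2 \<longrightarrow>
          s_stern (bin_val x) \<le> fib (4 * n + 2) + fib (2 * n) * fib (2 * n + 2))"
    using s_stern_delta_2_max[of "2 * n + 1"]
    by (simp add: Let_def two_zero_word_def)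
qed

end
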